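(* Every network architecture $\mathbb{A}$ satisfying the buffer axioms (B1)–(B8) satisfies the channel compliance facts (CC1)–(CC6).
   Context: Let $\mathcal{P}$ be a set of participants and $\mathcal{V}$ a set of message values. Synchronous alphabet $\Gamma=\{p\to q:m\mid p,q\in\mathcal{P},m\in\mathcal{V}\}$. Asynchronous alphabet $\Sigma=\Sigma_!\cup\Sigma_?$, with $\mathsf{snd}(p,q,m)\in\Sigma_!$ ($p$ sends $m$ to $q$) and $\mathsf{rcv}(p,q,m)\in\Sigma_?$ ($q$ receives $m$ from $p$); $\Sigma_p$ = send events with sender $p$ plus receive events with receiver $p$. $w\Downarrow_\Delta$ deletes letters outside $\Delta$; $\le$ is the prefix order. $\mathrm{split}$ is the homomorphism $\Gamma^*\to\Sigma^*$, $p\to q:m\mapsto\mathsf{snd}(p,q,m)\mathsf{rcv}(p,q,m)$. $w\equiv w'$ iff $w\Downarrow_{\Sigma_p}=w'\Downarrow_{\Sigma_p}$ for all $p$. $w$ is compliant with $\beta\in\Gamma^*$ if $w\Downarrow_{\Sigma_r}\le\mathrm{split}(\beta)\Downarrow_{\Sigma_r}$ for all $r$. A network architecture is $\mathbb{A}=(C,B,\xi,\mathit{insert},\mathit{remove},b_0)$: channels $C$, channel contents $B$, $\xi:\mathcal{P}\times\mathcal{P}\to C$, for each message $\mu\in M=\mathcal{P}\times\mathcal{P}\times\mathcal{V}$ partial functions $\mathit{insert}(\mu),\mathit{remove}(\mu):B\rightharpoonup B$, and $b_0\in B$. Channel states are maps $C\to B$, $\chi_0$ maps all channels to $b_0$;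 $\mathsf{snd}(p,q,m)$ applies $\mathit{insert}((p,q,m))$ at channel $\xi(p,q)$ and $\mathsf{rcv}(p,q,m)$ applies $\mathit{remove}((p,q,m))$ at channel $\xi(p,q)$. $w\in\Sigma^*$ is channel-compliant if applying its letters in order from $\chi_0$ is always defined, and channel-matched if moreover the result is $\chi_0$. Buffer axioms. Let $\mathit{Ops}$ be the set of all $\mathit{insert}(\mu),\mathit{remove}(\mu)$; a sequence $o=o_1\dots o_n\in\mathit{Ops}^*$ denotes the composite partial function $o_n\circ\dots\circ o_1$ (the empty sequence is the identity), and $b.f$ means $f(b)$. For all $b\in B$, $\mu,\nu\in M$, $o\in\mathit{Ops}^*$: (B1) $b.\mathit{insert}(\mu)$ is defined; (B2) $b_0.\mathit{insert}(\mu).\mathit{remove}(\mu)$ is defined; (B3) $b_0.\mathit{remove}(\mu)$ is undefined; (B4) if $b.\mathit{remove}(\mu)$ is defined then $b.\mathit{insert}(\nu).\mathit{remove}(\mu)$ is defined; (B5) if $b.\mathit{insert}(\mu).o$ is defined and $\mathit{remove}(\mu)$ does not occur in $o$, then $b.o$ is defined; (B6) if $b.\mathit{remove}(\mu)$ is defined then $b.\mathit{insert}(\mu).\mathit{remove}(\mu)=b.\mathit{remove}(\mu).\mathit{insert}(\mu)$; (B7) if $\mu\neq\nu$ then $b.\mathit{insert}(\mu).\mathit{remove}(\nu)=b.\mathit{remove}(\nu).\mathit{insert}(\mu)$; (B8) if $b.\mathit{remove}(\mu)$ is undefined, $b.\mathit{insert}(\mu).o.\mathit{remove}(\mu)$ is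 defined, and $\mathit{remove}(\mu)$ does not occur in $o$, then $b.\mathit{insert}(\mu).o.\mathit{remove}(\mu)=b.o$. Channel compliance facts, where in each $w\in\Sigma^*$ is channel-compliant: (CC1) for all $x\in\Sigma_!$, $wx$ is channel-compliant; (CC2) for all $p\neq q$, $m$: the number of occurrences of $\mathsf{snd}(p,q,m)$ in $w$ is at least that of $\mathsf{rcv}(p,q,m)$; (CC3) for all $\rho\in\Gamma^*$, $\mathrm{split}(\rho)$ is channel-compliant; (CC4) for all $\rho\in\Gamma^*$, if $w\equiv\mathrm{split}(\rho)$ then $w$ is channel-matched; (CC5) for all $x\in\Sigma_!$, $y\in\Sigma_?$, if $wy$ is channel-compliant then $wxy$ is; (CC6) for all $\alpha,\beta\in\Gamma^*$, $p\neq q$, $m$: if $w\Downarrow_{\Sigma_r}\le\mathrm{split}(\alpha\beta)\Downarrow_{\Sigma_r}$ for all $r$, $w\Downarrow_{\Sigma_q}=\mathrm{split}(\alpha)\Downarrow_{\Sigma_q}$, and $w\cdot\mathsf{rcv}(p,q,m)$ is channel-compliant, then there is $w'$ compliant with $\beta$ with $w'\Downarrow_{\Sigma_q}=\varepsilon$ and $w'\cdot\mathsf{rcv}(p,q,m)$ channel-compliant. *)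

theory Defs
  imports Main "HOL-Library.Sublist"
begin

datatype ('p,'v) gam = Comm 'p 'p 'v

datatype ('p,'v) sig = Snd 'p 'p 'v | Rcv 'p 'p 'v

type_synonym ('p,'v) msg = "'p \<times> 'p \<times> 'v"

definition sends :: "('p,'v) sig set" where
  "sends = {x. \<exists>p q m. x = Snd p q m}"

definition recvs :: "('p,'v) sig set" where
  "recvs = {x. \<exists>p q m. x = Rcv p q m}"

definition Sig_of :: "'p \<Rightarrow> ('p,'v) sig set" where
  "Sig_of p = {x. \<exists>q m. x = Snd p q m \<or> x = Rcv q p m}"

definition proj :: "('p,'v) sig list \<Rightarrow> ('p,'v) sig set \<Rightarrow> ('p,'v) sig list" where
  "proj w D = filter (\<lambda>x. x \<in> D) w"

fun split_letter :: "('p,'v) gam \<Rightarrow> ('p,'v) sig list" where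
  "split_letter (Comm p q m) = [Snd p q m, Rcv p q m]"

definition split :: "('p,'v) gam list \<Rightarrow> ('p,'v) sig list" where
  "split \<rho> = concat (map split_letter \<rho>)"

definition sig_equiv :: "('p,'v) sig list \<Rightarrow> ('p,'v) sig list \<Rightarrow> bool" where
  "sig_equiv w w' \<longleftrightarrow> (\<forall>p. proj w (Sig_of p) = proj w' (Sig_of p))"

definition compliant :: "('p,'v) sig list \<Rightarrow> ('p,'v) gam list \<Rightarrow> bool" where
  "compliant w \<beta> \<longleftrightarrow> (\<forall>r. prefix (proj w (Sig_of r)) (proj (split \<beta>) (Sig_of r)))"

text \<open>Network architecture: channels are the type 'c, channel contents the type 'b;
  insert/remove are partial functions modelled with option.\<close>
record ('p,'v,'c,'b) arch =
  xi :: "'p \<Rightarrow> 'p \<Rightarrow> 'c"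
  ins :: "('p,'v) msg \<Rightarrow> 'b \<Rightarrow> 'b option"
  rem :: "('p,'v) msg \<Rightarrow> 'b \<Rightarrow> 'b option"
  b0 :: 'b

datatype ('p,'v) bop = Ins "('p,'v) msg" | Rem "('p,'v) msg"

fun op_app :: "('p,'v,'c,'b) arch \<Rightarrow> ('p,'v) bop \<Rightarrow> 'b \<Rightarrow> 'b option" where
  "op_app A (Ins \<mu>) b = ins A \<mu> b"
| "op_app A (Rem \<mu>) b = rem A \<mu> b"

fun ops_app :: "('p,'v,'c,'b) arch \<Rightarrow> ('p,'v) bop list \<Rightarrow> 'b \<Rightarrow> 'b option" where
  "ops_app A [] b = Some b"
| "ops_app A (o1 # os) b = Option.bind (op_app A o1 b) (ops_app A os)"

definition buffer_axioms :: "('p,'v,'c,'b) arch \<Rightarrow> bool" where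
  "buffer_axioms A \<longleftrightarrow>
    (\<forall>b \<mu>. ins A \<mu> b \<noteq> None) \<and>
    (\<forall>\<mu>. ops_app A [Ins \<mu>, Rem \<mu>] (b0 A) \<noteq> None) \<and>
    (\<forall>\<mu>. rem A \<mu> (b0 A) = None) \<and>
    (\<forall>b \<mu> \<nu>. rem A \<mu> b \<noteq> None \<longrightarrow> ops_app A [Ins \<nu>, Rem \<mu>] b \<noteq> None) \<and>
    (\<forall>b \<mu> os. ops_app A (Ins \<mu> # os) b \<noteq> None \<and> Rem \<mu> \<notin> set os \<longrightarrow> ops_app A os b \<noteq> None) \<and>
    (\<forall>b \<mu>. rem A \<mu> b \<noteq> None \<longrightarrow> ops_app A [Ins \<mu>, Rem \<mu>] b = ops_app A [Rem \<mu>, Ins \<mu>] b) \<and>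
    (\<forall>b \<mu> \<nu>. \<mu> \<noteq> \<nu> \<longrightarrow> ops_app A [Ins \<mu>, Rem \<nu>] b = ops_app A [Rem \<nu>, Ins \<mu>] b) \<and>
    (\<forall>b \<mu> os. rem A \<mu> b = None \<and> ops_app A (Ins \<mu> # os @ [Rem \<mu>]) b \<noteq> None \<and> Rem \<mu> \<notin> set os
        \<longrightarrow> ops_app A (Ins \<mu> # os @ [Rem \<mu>]) b = ops_app A os b)"

fun step :: "('p,'v,'c,'b) arch \<Rightarrow> ('p,'v) sig \<Rightarrow> ('c \<Rightarrow> 'b) \<Rightarrow> ('c \<Rightarrow> 'b) option" where
  "step A (Snd p q m) \<chi> =
     map_option (\<lambda>b. \<chi>(xi A p q := b)) (ins A (p,q,m) (\<chi> (xi A p q)))"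
| "step A (Rcv p q m) \<chi> =
     map_option (\<lambda>b. \<chi>(xi A p q := b)) (rem A (p,q,m) (\<chi> (xi A p q)))"

fun run :: "('p,'v,'c,'b) arch \<Rightarrow> ('p,'v) sig list \<Rightarrow> ('c \<Rightarrow> 'b) \<Rightarrow> ('c \<Rightarrow> 'b) option" where
  "run A [] \<chi> = Some \<chi>"
| "run A (x # w) \<chi> = Option.bind (step A x \<chi>) (run A w)"

definition chi0 :: "('p,'v,'c,'b) arch \<Rightarrow> 'c \<Rightarrow> 'b" where
  "chi0 A = (\<lambda>_. b0 A)"

definition ch_compliant :: "('p,'v,'c,'b) arch \<Rightarrow> ('p,'v) sig list \<Rightarrow> bool" where
  "ch_compliant A w \<longleftrightarrow> run A w (chi0 A) \<noteq> None"

definition ch_matched :: "('p,'v,'c,'b) arch \<Rightarrow> ('p,'v) sig list \<Rightarrow> bool" where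
  "ch_matched A w \<longleftrightarrow> run A w (chi0 A) = Some (chi0 A)"

definition CC1 :: "('p,'v,'c,'b) arch \<Rightarrow> bool" where
  "CC1 A \<longleftrightarrow> (\<forall>w x. ch_compliant A w \<and> x \<in> sends \<longrightarrow> ch_compliant A (w @ [x]))"

definition CC2 :: "('p,'v,'c,'b) arch \<Rightarrow> bool" where
  "CC2 A \<longleftrightarrow> (\<forall>w p q m. ch_compliant A w \<and> p \<noteq> q \<longrightarrow>
      count_list w (Rcv p q m) \<le> count_list w (Snd p q m))"

definition CC3 :: "('p,'v,'c,'b) arch \<Rightarrow> bool" where
  "CC3 A \<longleftrightarrow> (\<forall>\<rho>. ch_compliant A (split \<rho>))"

definition CC4 :: "('p,'v,'c,'b) arch \<Rightarrow> bool" where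
  "CC4 A \<longleftrightarrow> (\<forall>w \<rho>. ch_compliant A w \<and> sig_equiv w (split \<rho>) \<longrightarrow> ch_matched A w)"

definition CC5 :: "('p,'v,'c,'b) arch \<Rightarrow> bool" where
  "CC5 A \<longleftrightarrow> (\<forall>w x y. ch_compliant A w \<and> x \<in> sends \<and> y \<in> recvs \<and> ch_compliant A (w @ [y])
      \<longrightarrow> ch_compliant A (w @ [x, y]))"

definition CC6 :: "('p,'v,'c,'b) arch \<Rightarrow> bool" where
  "CC6 A \<longleftrightarrow> (\<forall>w \<alpha> \<beta> p q m. ch_compliant A w \<and> p \<noteq> q \<and>
      (\<forall>r. prefix (proj w (Sig_of r)) (proj (split (\<alpha> @ \<beta>)) (Sig_of r))) \<and>
      proj w (Sig_of q) = proj (split \<alpha>) (Sig_of q) \<and>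
      ch_compliant A (w @ [Rcv p q m])
      \<longrightarrow> (\<exists>w'. compliant w' \<beta> \<and> proj w' (Sig_of q) = [] \<and> ch_compliant A (w' @ [Rcv p q m])))"

end

theory Submission
  imports Defs
begin

text \<open>On a single buffer the axioms say that a removal of \<mu> is only possible after an insertion
  of \<mu>, and that the first removal of \<mu> cancels against the first insertion of \<mu>: deleting
  both leaves the result unchanged (B8). Hence removals never outnumber insertions, matched
  pairs can be deleted from a run, and so can insertions that are never removed (B5).
  A network run is a family of independent buffer runs, one per channel, so the same holds for
  send and receive events. CC2 and CC4 follow directly, CC1, CC3 and CC5 are immediate from
  B1, B2/B3/B8 and B4, and for CC6 the witness is obtained from w by deleting the events already
  accounted for by \<alpha>.\<close>

section \<open>Runs of a single buffer\<close>

lemma ops_app_append: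
  "ops_app A (xs @ ys) b = Option.bind (ops_app A xs b) (ops_app A ys)"
  by (induction xs arbitrary: b) (auto split: Option.bind_split)

lemma ops_app_prefix_defined:
  "ops_app A (xs @ ys) b \<noteq> None \<Longrightarrow> ops_app A xs b \<noteq> None"
  by (cases "ops_app A xs b") (auto simp: ops_app_append)

lemma ops_app_infix_cong:
  "ops_app A xs b = ops_app A ys b \<Longrightarrow> ops_app A a b' = Some b \<Longrightarrow>
   ops_app A (a @ xs @ y) b' = ops_app A (a @ ys @ y) b'"
  by (simp add: ops_app_append)

locale buffer_arch =
  fixes A :: "('p,'v,'c,'b) arch"
  assumes buffer_axioms: "buffer_axioms A"
begin

text \<open>The axioms B1--B5, B7 and B8.\<close>

lemma ins_defined: "ins A \<mu> b \<noteq> None"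
  using buffer_axioms unfolding buffer_axioms_def by meson

lemma ins_rem_b0_defined: "ops_app A [Ins \<mu>, Rem \<mu>] (b0 A) \<noteq> None"
  using buffer_axioms unfolding buffer_axioms_def by meson

lemma rem_b0_undefined: "rem A \<mu> (b0 A) = None"
  using buffer_axioms unfolding buffer_axioms_def by meson

lemma rem_after_ins_defined:
  "rem A \<mu> b \<noteq> None \<Longrightarrow> ops_app A [Ins \<nu>, Rem \<mu>] b \<noteq> None"
  using buffer_axioms unfolding buffer_axioms_def by meson

lemma ops_app_drop_unmatched_ins:
  "ops_app A (Ins \<mu> # os) b \<noteq> None \<Longrightarrow> Rem \<mu> \<notin> set os \<Longrightarrow> ops_app A os b \<noteq> None"
  using buffer_axioms unfolding buffer_axioms_def by meson

lemma ins_rem_commute: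
  "\<mu> \<noteq> \<nu> \<Longrightarrow> ops_app A [Ins \<mu>, Rem \<nu>] b = ops_app A [Rem \<nu>, Ins \<mu>] b"
  using buffer_axioms unfolding buffer_axioms_def by meson

lemma ops_app_cancel_ins_rem:
  "rem A \<mu> b = None \<Longrightarrow> ops_app A (Ins \<mu> # os @ [Rem \<mu>]) b \<noteq> None \<Longrightarrow> Rem \<mu> \<notin> set os
   \<Longrightarrow> ops_app A (Ins \<mu> # os @ [Rem \<mu>]) b = ops_app A os b"
  using buffer_axioms unfolding buffer_axioms_def by meson

lemma ins_list_rem_commute:
  assumes "\<forall>x\<in>set a. \<exists>\<mu>. x = Ins \<mu> \<and> \<mu> \<noteq> \<nu>"
  shows "ops_app A (a @ [Rem \<nu>]) b = ops_app A (Rem \<nu> # a) b"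
  using assms
proof (induction a arbitrary: b)
  case Nil
  then show ?case by simp
next
  case (Cons x a)
  then obtain \<mu> where x: "x = Ins \<mu>" "\<mu> \<noteq> \<nu>" by auto
  have "ops_app A (a @ [Rem \<nu>]) = ops_app A (Rem \<nu> # a)"
    using Cons by (intro ext) simp
  then have "ops_app A (x # a @ [Rem \<nu>]) b = Option.bind (ins A \<mu> b) (ops_app A (Rem \<nu> # a))"
    using x by simp
  also have "\<dots> = Option.bind (ops_app A [Ins \<mu>, Rem \<nu>] b) (ops_app A a)"
    by (cases "ins A \<mu> b") simp_all
  also have "\<dots> = Option.bind (ops_app A [Rem \<nu>, Ins \<mu>] b) (ops_app A a)"
    by (simp only: ins_rem_commute[OF x(2)])
  also have "\<dots> = ops_app A ([Rem \<nu>, Ins \<mu>] @ a) b"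
    by (simp only: ops_app_append)
  finally show ?case
    using x by simp
qed

lemma ops_app_cancel_pair:
  assumes "ops_app A (a @ [Rem \<nu>]) b = None"
    and "ops_app A (a @ Ins \<nu> # c @ Rem \<nu> # y) b \<noteq> None" and "Rem \<nu> \<notin> set c"
  shows "ops_app A (a @ Ins \<nu> # c @ Rem \<nu> # y) b = ops_app A (a @ c @ y) b"
proof -
  obtain b' where b': "ops_app A a b = Some b'"
    using ops_app_prefix_defined[OF assms(2)] by blast
  have "rem A \<nu> b' = None"
    using assms(1) b' by (simp add: ops_app_append split: Option.bind_split_asm)
  moreover have "ops_app A (Ins \<nu> # c @ [Rem \<nu>]) b' \<noteq> None"
    using assms(2) b' ops_app_prefix_defined[of A "Ins \<nu> # c @ [Rem \<nu>]" y b']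
    by (simp add: ops_app_append)
  ultimately have "ops_app A (Ins \<nu> # c @ [Rem \<nu>]) b' = ops_app A c b'"
    using assms(3) by (rule ops_app_cancel_ins_rem)
  from ops_app_infix_cong[OF this b', of y] show ?thesis
    by simp
qed

lemma ins_before_rem:
  "ops_app A (a @ [Rem \<nu>]) (b0 A) \<noteq> None \<Longrightarrow> Ins \<nu> \<in> set a"
proof (induction "length a" arbitrary: a \<nu> rule: less_induct)
  case less
  show ?case
  proof (cases "\<exists>x\<in>set a. \<exists>\<nu>'. x = Rem \<nu>'")
    case False
    txt \<open>Then a consists of insertions; if none is of \<nu>, B7 moves the removal to the front,
      where B3 applies.\<close>
    show ?thesis
    proof (rule ccontr)
      assume "Ins \<nu> \<notin> set a"
      then have "\<forall>x\<in>set a. \<exists>\<mu>. x = Ins \<mu> \<and> \<mu> \<noteq> \<nu>"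
        using False by (metis bop.exhaust)
      then have "ops_app A (a @ [Rem \<nu>]) (b0 A) = ops_app A (Rem \<nu> # a) (b0 A)"
        by (rule ins_list_rem_commute)
      then show False
        using less.prems by (simp add: rem_b0_undefined)
    qed
  next
    case True
    txt \<open>The first removal in a has its insertion before it and cancels against it,
      which shortens a.\<close>
    from split_list_first_prop[OF True] obtain o1 x o2 where "a = o1 @ x # o2"
      and "\<exists>\<nu>'. x = Rem \<nu>'" and o1: "\<forall>x\<in>set o1. \<nexists>\<nu>. x = Rem \<nu>"
      by blast
    then obtain \<nu>' where a: "a = o1 @ Rem \<nu>' # o2"
      by blast
    have "ops_app A (o1 @ [Rem \<nu>']) (b0 A) \<noteq> None"
      using less.prems ops_app_prefix_defined[of A "o1 @ [Rem \<nu>']"] a by simp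
    then have "Ins \<nu>' \<in> set o1"
      using less.hyps[of o1 \<nu>'] a by simp
    then obtain a1 c where o1_eq: "o1 = a1 @ Ins \<nu>' # c" and "Ins \<nu>' \<notin> set a1"
      by (auto dest: split_list_first)
    then have "ops_app A (a1 @ [Rem \<nu>']) (b0 A) = None"
      using less.hyps[of a1 \<nu>'] a by fastforce
    moreover have "Rem \<nu>' \<notin> set c"
      using o1 o1_eq by fastforce
    ultimately have "ops_app A (a @ [Rem \<nu>]) (b0 A) = ops_app A ((a1 @ c @ o2) @ [Rem \<nu>]) (b0 A)"
      using ops_app_cancel_pair[of a1 \<nu>' "b0 A" c "o2 @ [Rem \<nu>]"] less.prems a o1_eq by simp
    then have "Ins \<nu> \<in> set (a1 @ c @ o2)"
      using less.hyps[of "a1 @ c @ o2" \<nu>] less.prems a o1_eq by simp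
    then show ?thesis
      using a o1_eq by auto
  qed
qed

lemma ops_app_cancel_first_pair:
  assumes "ops_app A (a @ Ins \<nu> # c @ Rem \<nu> # y) (b0 A) \<noteq> None"
    and "Ins \<nu> \<notin> set a" and "Rem \<nu> \<notin> set c"
  shows "ops_app A (a @ Ins \<nu> # c @ Rem \<nu> # y) (b0 A) = ops_app A (a @ c @ y) (b0 A)"
proof (rule ops_app_cancel_pair[OF _ assms(1,3)])
  show "ops_app A (a @ [Rem \<nu>]) (b0 A) = None"
    using ins_before_rem assms(2) by blast
qed

lemma count_Rem_le_count_Ins:
  "ops_app A os (b0 A) \<noteq> None \<Longrightarrow> count_list os (Rem \<mu>) \<le> count_list os (Ins \<mu>)"
proof (induction "length os" arbitrary: os rule: less_induct)
  case less
  show ?case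
  proof (cases "Rem \<mu> \<in> set os")
    case False
    then show ?thesis
      by (simp add: count_list_0_iff)
  next
    case True
    then obtain a y where os: "os = a @ Rem \<mu> # y" and "Rem \<mu> \<notin> set a"
      by (auto dest: split_list_first)
    have "ops_app A (a @ [Rem \<mu>]) (b0 A) \<noteq> None"
      using less.prems ops_app_prefix_defined[of A "a @ [Rem \<mu>]"] os by simp
    then have "Ins \<mu> \<in> set a"
      by (rule ins_before_rem)
    then obtain a1 c where a: "a = a1 @ Ins \<mu> # c" and "Ins \<mu> \<notin> set a1"
      by (auto dest: split_list_first)
    moreover have "Rem \<mu> \<notin> set c"
      using \<open>Rem \<mu> \<notin> set a\<close> a by simp
    ultimately have "ops_app A os (b0 A) = ops_app A (a1 @ c @ y) (b0 A)"
      using ops_app_cancel_first_pair less.prems os by simp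
    then have "count_list (a1 @ c @ y) (Rem \<mu>) \<le> count_list (a1 @ c @ y) (Ins \<mu>)"
      using less.prems os a by (intro less.hyps) simp_all
    then show ?thesis
      using os a by simp
  qed
qed

lemma ins_rem_b0: "\<exists>b. ins A \<mu> (b0 A) = Some b \<and> rem A \<mu> b = Some (b0 A)"
proof -
  have "ops_app A (Ins \<mu> # [] @ [Rem \<mu>]) (b0 A) = ops_app A [] (b0 A)"
    using rem_b0_undefined ins_rem_b0_defined by (intro ops_app_cancel_ins_rem) auto
  then show ?thesis
    by (auto split: Option.bind_split_asm)
qed

end

section \<open>Networks of channels\<close>

fun chan :: "('p,'v,'c,'b) arch \<Rightarrow> ('p,'v) sig \<Rightarrow> 'c" where
  "chan A (Snd p q m) = xi A p q"
| "chan A (Rcv p q m) = xi A p q"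

fun bop_of :: "('p,'v) sig \<Rightarrow> ('p,'v) bop" where
  "bop_of (Snd p q m) = Ins (p, q, m)"
| "bop_of (Rcv p q m) = Rem (p, q, m)"

definition chan_ops :: "('p,'v,'c,'b) arch \<Rightarrow> 'c \<Rightarrow> ('p,'v) sig list \<Rightarrow> ('p,'v) bop list" where
  "chan_ops A c w = map bop_of (filter (\<lambda>x. chan A x = c) w)"

lemma bop_of_eq_iff [simp]: "bop_of x = bop_of y \<longleftrightarrow> x = y"
  by (cases x; cases y) simp_all

lemma chan_ops_Nil [simp]: "chan_ops A c [] = []"
  and chan_ops_Cons:
    "chan_ops A c (x # w) = (if chan A x = c then bop_of x # chan_ops A c w else chan_ops A c w)"
  and chan_ops_append [simp]: "chan_ops A c (u @ v) = chan_ops A c u @ chan_ops A c v"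
  by (simp_all add: chan_ops_def)

lemma chan_ops_Snd [simp]: "chan_ops A c (Snd p q m # w) =
    (if xi A p q = c then Ins (p, q, m) # chan_ops A c w else chan_ops A c w)"
  and chan_ops_Rcv [simp]: "chan_ops A c (Rcv p q m # w) =
    (if xi A p q = c then Rem (p, q, m) # chan_ops A c w else chan_ops A c w)"
  by (simp_all add: chan_ops_Cons)

lemma count_chan_ops:
  "count_list (chan_ops A c w) (bop_of x) = (if chan A x = c then count_list w x else 0)"
  by (induction w) (auto simp: chan_ops_Cons)

lemma mem_chan_ops: "bop_of x \<in> set (chan_ops A c w) \<longleftrightarrow> x \<in> set w \<and> chan A x = c"
  by (auto simp: chan_ops_def)

lemma step_eq_op_app:
  "step A x \<chi> = map_option (\<lambda>b. \<chi>(chan A x := b)) (op_app A (bop_of x) (\<chi> (chan A x)))"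
  by (cases x) simp_all

lemma run_eq_chan_ops:
  "run A w \<chi> = (if \<forall>c. ops_app A (chan_ops A c w) (\<chi> c) \<noteq> None
     then Some (\<lambda>c. the (ops_app A (chan_ops A c w) (\<chi> c))) else None)"
proof (induction w arbitrary: \<chi>)
  case Nil
  then show ?case by simp
next
  case (Cons x w)
  show ?case
  proof (cases "op_app A (bop_of x) (\<chi> (chan A x))")
    case None
    then have "ops_app A (chan_ops A (chan A x) (x # w)) (\<chi> (chan A x)) = None"
      by (simp add: chan_ops_Cons)
    then show ?thesis
      using None by (auto simp: step_eq_op_app)
  next
    case (Some b)
    then have "ops_app A (chan_ops A c (x # w)) (\<chi> c) =
        ops_app A (chan_ops A c w) ((\<chi>(chan A x := b)) c)" for c
      by (simp add: chan_ops_Cons)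
    moreover have "run A (x # w) \<chi> = run A w (\<chi>(chan A x := b))"
      using Some by (simp add: step_eq_op_app)
    ultimately show ?thesis
      using Cons.IH[of "\<chi>(chan A x := b)"] by presburger
  qed
qed

lemma run_defined_iff: "run A w \<chi> \<noteq> None \<longleftrightarrow> (\<forall>c. ops_app A (chan_ops A c w) (\<chi> c) \<noteq> None)"
  by (subst run_eq_chan_ops) simp

lemma run_eqI:
  "(\<And>c. ops_app A (chan_ops A c w) (\<chi> c) = ops_app A (chan_ops A c w') (\<chi> c)) \<Longrightarrow>
   run A w \<chi> = run A w' \<chi>"
  by (simp add: run_eq_chan_ops[of A w] run_eq_chan_ops[of A w'])

lemma run_append: "run A (u @ v) \<chi> = Option.bind (run A u \<chi>) (run A v)"
  by (induction u arbitrary: \<chi>) (auto split: Option.bind_split)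

lemma run_prefix_defined: "run A (u @ v) \<chi> \<noteq> None \<Longrightarrow> run A u \<chi> \<noteq> None"
  by (cases "run A u \<chi>") (auto simp: run_append)

lemma chi0_apply [simp]: "chi0 A c = b0 A"
  by (simp add: chi0_def)

section \<open>Deleting first occurrences\<close>

fun remove_firsts :: "('a \<Rightarrow> nat) \<Rightarrow> 'a list \<Rightarrow> 'a list" where
  "remove_firsts n [] = []"
| "remove_firsts n (x # w) =
     (if 0 < n x then remove_firsts (n(x := n x - 1)) w else x # remove_firsts n w)"

lemma remove_firsts_cong: "\<forall>x\<in>set w. n x = n' x \<Longrightarrow> remove_firsts n w = remove_firsts n' w"
  by (induction w arbitrary: n n') auto

lemma remove_firsts_id: "\<forall>x\<in>set w. n x = 0 \<Longrightarrow> remove_firsts n w = w"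
  by (induction w) auto

lemma remove_firsts_eq_Nil: "\<forall>x\<in>set w. count_list w x \<le> n x \<Longrightarrow> remove_firsts n w = []"
proof (induction w arbitrary: n)
  case Nil
  then show ?case by simp
next
  case (Cons x w)
  then have "0 < n x" and "\<forall>y\<in>set w. count_list w y \<le> (n(x := n x - 1)) y"
    by (auto split: if_splits)
  then show ?case
    using Cons.IH by simp
qed

lemma remove_firsts_append:
  "remove_firsts n (u @ v) = remove_firsts n u @ remove_firsts (\<lambda>x. n x - count_list u x) v"
proof (induction u arbitrary: n)
  case Nil
  then show ?case by simp
next
  case (Cons y u)
  have "(\<lambda>x. (n(y := n y - 1)) x - count_list u x) = (\<lambda>x. n x - count_list (y # u) x)" if "0 < n y"
    using that by (auto simp: fun_eq_iff)
  moreover have "(\<lambda>x. n x - count_list u x) = (\<lambda>x. n x - count_list (y # u) x)" if "\<not> 0 < n y"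
    using that by (auto simp: fun_eq_iff)
  ultimately show ?case
    using Cons.IH[of n] Cons.IH[of "n(y := n y - 1)"] by (simp add: fun_upd_def)
qed

lemma remove_firsts_remove:
  "x \<notin> set u \<Longrightarrow> 0 < n x \<Longrightarrow> remove_firsts n (u @ x # v) = remove_firsts (n(x := n x - 1)) (u @ v)"
  by (induction u arbitrary: n) (auto simp: fun_upd_twist)

lemma filter_remove_firsts: "filter P (remove_firsts n w) = remove_firsts n (filter P w)"
proof (induction w arbitrary: n)
  case Nil
  then show ?case by simp
next
  case (Cons x w)
  have "remove_firsts (n(x := n x - 1)) (filter P w) = remove_firsts n (filter P w)" if "\<not> P x"
    using that by (intro remove_firsts_cong) auto
  then show ?case
    using Cons.IH by (auto simp: fun_upd_def)
qed

section \<open>Channel compliance\<close>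

lemma Snd_in_Sig_of [simp]: "Snd p q m \<in> Sig_of r \<longleftrightarrow> r = p"
  and Rcv_in_Sig_of [simp]: "Rcv p q m \<in> Sig_of r \<longleftrightarrow> r = q"
  by (auto simp: Sig_of_def)

lemma proj_append [simp]: "proj (u @ v) D = proj u D @ proj v D"
  by (simp add: proj_def)

lemma set_proj [simp]: "set (proj w D) = set w \<inter> D"
  by (auto simp: proj_def)

lemma count_proj: "x \<in> D \<Longrightarrow> count_list (proj w D) x = count_list w x"
  by (induction w) (auto simp: proj_def)

lemma proj_remove_firsts: "proj (remove_firsts n w) D = remove_firsts n (proj w D)"
  by (simp add: proj_def filter_remove_firsts)

lemma split_Nil [simp]: "split [] = []"
  and split_Cons [simp]: "split (Comm p q m # \<rho>) = Snd p q m # Rcv p q m # split \<rho>"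
  and split_append [simp]: "split (\<alpha> @ \<beta>) = split \<alpha> @ split \<beta>"
  by (simp_all add: split_def)

lemma count_split_Snd_eq_Rcv: "count_list (split \<rho>) (Snd p q m) = count_list (split \<rho>) (Rcv p q m)"
proof (induction \<rho>)
  case Nil
  then show ?case by simp
next
  case (Cons g \<rho>)
  then show ?case by (cases g) auto
qed

lemma prefix_remove_firsts:
  assumes "prefix u (a @ b)" and "\<forall>x\<in>set u. n x = min (count_list a x) (count_list u x)"
  shows "prefix (remove_firsts n u) b"
  using assms(1) unfolding prefix_append
proof
  assume "prefix u a"
  then have "count_list u x \<le> count_list a x" for x
    by (metis prefix_def count_list_append le_add1)
  then show ?thesis
    using assms(2) by (simp add: remove_firsts_eq_Nil)
next
  assume "\<exists>v. u = a @ v \<and> prefix v b"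
  then obtain v where u: "u = a @ v" and "prefix v b"
    by blast
  have "\<forall>x\<in>set u. n x = count_list a x"
    using assms(2) u by auto
  then have "remove_firsts n a = []" and "remove_firsts (\<lambda>x. n x - count_list a x) v = v"
    using u by (auto intro: remove_firsts_eq_Nil remove_firsts_id)
  then show ?thesis
    using u \<open>prefix v b\<close> by (simp add: remove_firsts_append)
qed

lemma compliant_remove_firsts:
  assumes "\<forall>r. prefix (proj w (Sig_of r)) (proj (split (\<alpha> @ \<beta>)) (Sig_of r))"
  shows "compliant (remove_firsts (\<lambda>x. min (count_list (split \<alpha>) x) (count_list w x)) w) \<beta>"
  unfolding compliant_def proj_remove_firsts
proof
  fix r
  show "prefix
      (remove_firsts (\<lambda>x. min (count_list (split \<alpha>) x) (count_list w x)) (proj w (Sig_of r)))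
      (proj (split \<beta>) (Sig_of r))"
    using assms by (intro prefix_remove_firsts) (auto simp: count_proj)
qed

text \<open>Deleting the first n x occurrences of every event x keeps a run defined when every
  deleted receive can be cancelled against a deleted send, and surplus sends are deleted only
  for messages none of whose receives survive.\<close>
definition removable :: "(('p,'v) sig \<Rightarrow> nat) \<Rightarrow> ('p,'v) sig list \<Rightarrow> bool" where
  "removable n w \<longleftrightarrow> (\<forall>p q m.
     n (Rcv p q m) \<le> count_list w (Rcv p q m) \<and> n (Rcv p q m) \<le> n (Snd p q m) \<and>
     (n (Rcv p q m) < count_list w (Rcv p q m) \<longrightarrow> n (Snd p q m) = n (Rcv p q m)))"

lemma removableI:
  assumes "\<And>p q m. n (Rcv p q m) \<le> count_list w (Rcv p q m)"
    and "\<And>p q m. n (Rcv p q m) \<le> n (Snd p q m)"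
    and "\<And>p q m. n (Rcv p q m) < count_list w (Rcv p q m) \<Longrightarrow> n (Snd p q m) = n (Rcv p q m)"
  shows "removable n w"
  using assms unfolding removable_def by blast

lemma removable_cancel_pair:
  assumes "removable n (a @ Snd p q m # c @ Rcv p q m # y)"
  shows "removable (n(Rcv p q m := n (Rcv p q m) - 1, Snd p q m := n (Snd p q m) - 1)) (a @ c @ y)"
  using assms unfolding removable_def by (intro allI, elim allE) auto

lemma removable_drop_Snd:
  assumes "removable n (u @ Snd p q m # v)" and "\<forall>p q m. n (Rcv p q m) = 0"
  shows "removable (n(Snd p q m := n (Snd p q m) - 1)) (u @ v)"
  using assms(1) unfolding removable_def by (intro allI, elim allE) (auto simp: assms(2))

context buffer_arch
begin

lemma count_Rcv_le_count_Snd: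
  assumes "run A w (chi0 A) \<noteq> None"
  shows "count_list w (Rcv p q m) \<le> count_list w (Snd p q m)"
proof -
  have "ops_app A (chan_ops A (xi A p q) w) (b0 A) \<noteq> None"
    using assms unfolding run_defined_iff by simp
  from count_Rem_le_count_Ins[OF this, of "(p, q, m)"] show ?thesis
    using count_chan_ops[of A "xi A p q" w "Rcv p q m"]
      count_chan_ops[of A "xi A p q" w "Snd p q m"]
    by simp
qed

lemma run_cancel_first_pair:
  assumes "run A w (chi0 A) \<noteq> None" and w: "w = x @ Rcv p q m # y" and x_no_Rcv: "Rcv p q m \<notin> set x"
  obtains a c where "x = a @ Snd p q m # c" and "Snd p q m \<notin> set a"
    and "run A (a @ c @ y) (chi0 A) = run A w (chi0 A)"
proof -
  have run: "run A (x @ Rcv p q m # y) (chi0 A) \<noteq> None"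
    using assms(1) w by simp
  have "run A (x @ [Rcv p q m]) (chi0 A) \<noteq> None"
    using run run_prefix_defined[of A "x @ [Rcv p q m]"] by simp
  from count_Rcv_le_count_Snd[OF this, of p q m] have "count_list x (Snd p q m) \<noteq> 0"
    by simp
  then have "Snd p q m \<in> set x"
    by (simp add: count_list_0_iff)
  then obtain a c where x: "x = a @ Snd p q m # c" and a: "Snd p q m \<notin> set a"
    by (auto dest: split_list_first)
  have "run A (a @ c @ y) (chi0 A) = run A (x @ Rcv p q m # y) (chi0 A)"
  proof (rule run_eqI)
    fix d
    show "ops_app A (chan_ops A d (a @ c @ y)) (chi0 A d) =
      ops_app A (chan_ops A d (x @ Rcv p q m # y)) (chi0 A d)"
    proof (cases "d = xi A p q")
      case True
      have "ops_app A (chan_ops A d (x @ Rcv p q m # y)) (b0 A) \<noteq> None"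
        using run unfolding run_defined_iff by simp
      moreover have "Ins (p, q, m) \<notin> set (chan_ops A d a)"
        and "Rem (p, q, m) \<notin> set (chan_ops A d c)"
        using mem_chan_ops[of "Snd p q m" A d a] mem_chan_ops[of "Rcv p q m" A d c] a x_no_Rcv x
        by auto
      ultimately show ?thesis
        using ops_app_cancel_first_pair[of "chan_ops A d a" "(p, q, m)"] x True by simp
    qed (simp add: x)
  qed
  with x a w that show ?thesis
    by blast
qed

lemma run_drop_unmatched_Snd:
  assumes run: "run A (u @ Snd p q m # v) (chi0 A) \<noteq> None" and "Rcv p q m \<notin> set v"
  shows "run A (u @ v) (chi0 A) \<noteq> None"
  unfolding run_defined_iff
proof
  fix c
  have run_c: "ops_app A (chan_ops A c (u @ Snd p q m # v)) (b0 A) \<noteq> None"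
    using run unfolding run_defined_iff by simp
  show "ops_app A (chan_ops A c (u @ v)) (chi0 A c) \<noteq> None"
  proof (cases "c = xi A p q")
    case True
    then obtain b where b: "ops_app A (chan_ops A c u) (b0 A) = Some b"
      using ops_app_prefix_defined[of A "chan_ops A c u"] run_c by fastforce
    then have "ops_app A (Ins (p, q, m) # chan_ops A c v) b \<noteq> None"
      using run_c True by (simp add: ops_app_append del: ops_app.simps)
    moreover have "Rem (p, q, m) \<notin> set (chan_ops A c v)"
      using mem_chan_ops[of "Rcv p q m" A c v] assms(2) by simp
    ultimately have "ops_app A (chan_ops A c v) b \<noteq> None"
      by (rule ops_app_drop_unmatched_ins)
    then show ?thesis
      using b by (simp add: ops_app_append)
  qed (use run_c in simp)
qed

lemma run_eq_chi0_if_balanced: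
  assumes "run A w (chi0 A) \<noteq> None"
    and "\<And>p q m. count_list w (Snd p q m) = count_list w (Rcv p q m)"
  shows "run A w (chi0 A) = Some (chi0 A)"
  using assms
proof (induction "length w" arbitrary: w rule: less_induct)
  case less
  show ?case
  proof (cases "\<exists>p q m. Rcv p q m \<in> set w")
    case True
    then obtain p q m x y where w: "w = x @ Rcv p q m # y" and "Rcv p q m \<notin> set x"
      by (auto dest: split_list_first)
    with less.prems(1) obtain a c where x: "x = a @ Snd p q m # c"
      and run: "run A (a @ c @ y) (chi0 A) = run A w (chi0 A)"
      by (rule run_cancel_first_pair)
    have "run A (a @ c @ y) (chi0 A) = Some (chi0 A)"
    proof (rule less.hyps)
      show "length (a @ c @ y) < length w" and "run A (a @ c @ y) (chi0 A) \<noteq> None"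
        using less.prems(1) w x run by simp_all
      show "count_list (a @ c @ y) (Snd p' q' m') = count_list (a @ c @ y) (Rcv p' q' m')"
        for p' q' m'
        using less.prems(2)[of p' q' m'] w x by (auto split: if_splits)
    qed
    then show ?thesis
      using run by simp
  next
    case False
    then have "Snd p q m \<notin> set w" for p q m
      using less.prems(2)[of p q m] by (simp add: count_list_0_iff)
    with False have "x \<notin> set w" for x
      by (cases x) auto
    then have "w = []"
      by (cases w) auto
    then show ?thesis
      by simp
  qed
qed

lemma run_remove_firsts_defined:
  assumes "run A w (chi0 A) \<noteq> None" and "removable n w"
  shows "run A (remove_firsts n w) (chi0 A) \<noteq> None"
  using assms
proof (induction "length w" arbitrary: w n rule: less_induct)
  case less
  consider (rcv) p q m where "0 < n (Rcv p q m)"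
    | (snd) p q m where "\<forall>p q m. n (Rcv p q m) = 0" and "0 < n (Snd p q m)" and "Snd p q m \<in> set w"
    | (none) "\<forall>x\<in>set w. n x = 0"
    by (metis bot_nat_0.not_eq_extremum sig.exhaust)
  then show ?case
  proof cases
    case rcv
    with less.prems(2) have "count_list w (Rcv p q m) \<noteq> 0"
      unfolding removable_def by (metis not_le le_zero_eq)
    then obtain x y where w: "w = x @ Rcv p q m # y" and "Rcv p q m \<notin> set x"
      by (auto simp: count_list_0_iff dest: split_list_first)
    with less.prems(1) obtain a c where x: "x = a @ Snd p q m # c" and "Snd p q m \<notin> set a"
      and run: "run A (a @ c @ y) (chi0 A) = run A w (chi0 A)"
      by (rule run_cancel_first_pair)
    define n' where "n' = n(Rcv p q m := n (Rcv p q m) - 1, Snd p q m := n (Snd p q m) - 1)"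
    have "0 < n (Snd p q m)"
      using rcv less.prems(2) unfolding removable_def by (metis order.strict_trans2)
    have "remove_firsts n w =
        remove_firsts (n(Rcv p q m := n (Rcv p q m) - 1)) (a @ Snd p q m # c @ y)"
      using w x rcv \<open>Rcv p q m \<notin> set x\<close> remove_firsts_remove[of "Rcv p q m" x n y] by simp
    also have "\<dots> = remove_firsts n' (a @ c @ y)"
      unfolding n'_def using \<open>0 < n (Snd p q m)\<close> \<open>Snd p q m \<notin> set a\<close>
        remove_firsts_remove[of "Snd p q m" a "n(Rcv p q m := n (Rcv p q m) - 1)" "c @ y"]
      by simp
    finally have "remove_firsts n w = remove_firsts n' (a @ c @ y)" .
    moreover have "run A (remove_firsts n' (a @ c @ y)) (chi0 A) \<noteq> None"
      using less.prems w x run removable_cancel_pair[of n a p q m c y] unfolding n'_def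
      by (intro less.hyps) auto
    ultimately show ?thesis
      by simp
  next
    case snd
    with less.prems(2) have "Rcv p q m \<notin> set w"
      unfolding removable_def by (metis count_list_0_iff not_gr0)
    obtain u v where w: "w = u @ Snd p q m # v" and "Snd p q m \<notin> set u"
      using snd by (auto dest: split_list_first)
    define n' where "n' = n(Snd p q m := n (Snd p q m) - 1)"
    have "remove_firsts n w = remove_firsts n' (u @ v)"
      unfolding n'_def w using snd \<open>Snd p q m \<notin> set u\<close> by (intro remove_firsts_remove) auto
    moreover have "run A (u @ v) (chi0 A) \<noteq> None"
      using run_drop_unmatched_Snd[of u p q m v] less.prems(1) w \<open>Rcv p q m \<notin> set w\<close> by simp
    then have "run A (remove_firsts n' (u @ v)) (chi0 A) \<noteq> None"
      using less.prems(2) w snd removable_drop_Snd[of n u p q m v] unfolding n'_def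
      by (intro less.hyps) auto
    ultimately show ?thesis
      by simp
  next
    case none
    then show ?thesis
      using less.prems(1) by (simp add: remove_firsts_id)
  qed
qed

lemma run_split_eq_chi0: "run A (split \<rho>) (chi0 A) = Some (chi0 A)"
  unfolding chi0_def
proof (induction \<rho>)
  case Nil
  then show ?case by simp
next
  case (Cons g \<rho>)
  obtain p q m where g: "g = Comm p q m"
    by (cases g)
  obtain b where "ins A (p, q, m) (b0 A) = Some b" and "rem A (p, q, m) b = Some (b0 A)"
    using ins_rem_b0 by blast
  moreover have "(\<lambda>c. b0 A)(xi A p q := b0 A) = (\<lambda>c. b0 A)"
    by auto
  ultimately show ?case
    using Cons g by simp
qed

lemma CC1_holds: "CC1 A"
  unfolding CC1_def ch_compliant_def sends_def
  by (auto simp: run_append ins_defined split: Option.bind_split)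

lemma CC2_holds: "CC2 A"
  unfolding CC2_def ch_compliant_def using count_Rcv_le_count_Snd by blast

lemma CC3_holds: "CC3 A"
  unfolding CC3_def ch_compliant_def by (simp add: run_split_eq_chi0)

lemma CC4_holds: "CC4 A"
  unfolding CC4_def ch_compliant_def ch_matched_def
proof (intro allI impI, elim conjE)
  fix w \<rho>
  assume run: "run A w (chi0 A) \<noteq> None" and equiv: "sig_equiv w (split \<rho>)"
  have "count_list w (Snd p q m) = count_list w (Rcv p q m)" for p q m
  proof -
    have "count_list w (Snd p q m) = count_list (split \<rho>) (Snd p q m)"
      using equiv count_proj[of "Snd p q m" "Sig_of p"] unfolding sig_equiv_def
      by (metis Snd_in_Sig_of)
    also have "\<dots> = count_list (split \<rho>) (Rcv p q m)"
      by (rule count_split_Snd_eq_Rcv)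
    also have "\<dots> = count_list w (Rcv p q m)"
      using equiv count_proj[of "Rcv p q m" "Sig_of q"] unfolding sig_equiv_def
      by (metis Rcv_in_Sig_of)
    finally show ?thesis .
  qed
  with run show "run A w (chi0 A) = Some (chi0 A)"
    by (rule run_eq_chi0_if_balanced)
qed

lemma CC5_holds: "CC5 A"
  unfolding CC5_def ch_compliant_def sends_def recvs_def
proof (intro allI impI, elim conjE)
  fix w and x y :: "('p,'v) sig"
  assume "run A w (chi0 A) \<noteq> None" and "x \<in> {x. \<exists>p q m. x = Snd p q m}"
    and "y \<in> {x. \<exists>p q m. x = Rcv p q m}" and run_y: "run A (w @ [y]) (chi0 A) \<noteq> None"
  then obtain \<chi> p q m p' q' m' where run: "run A w (chi0 A) = Some \<chi>"
    and x: "x = Snd p q m" and y: "y = Rcv p' q' m'"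
    by blast
  have rem: "rem A (p', q', m') (\<chi> (xi A p' q')) \<noteq> None"
    using run_y run y by (cases "rem A (p', q', m') (\<chi> (xi A p' q'))") (auto simp: run_append)
  obtain b where ins: "ins A (p, q, m) (\<chi> (xi A p q)) = Some b"
    using ins_defined by blast
  show "run A (w @ [x, y]) (chi0 A) \<noteq> None"
  proof (cases "xi A p q = xi A p' q'")
    case True
    then have "rem A (p', q', m') b \<noteq> None"
      using rem_after_ins_defined[OF rem, of "(p, q, m)"] ins
      by (cases "rem A (p', q', m') b") auto
    then show ?thesis
      using run x y ins True by (cases "rem A (p', q', m') b") (auto simp: run_append)
  next
    case False
    then show ?thesis
      using run x y ins rem by (cases "rem A (p', q', m') (\<chi> (xi A p' q'))") (auto simp: run_append)
  qed
qed

lemma residual_enables_Rcv: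
  assumes run: "run A w (chi0 A) \<noteq> None"
    and prefixes: "\<forall>r. prefix (proj w (Sig_of r)) (proj (split (\<alpha> @ \<beta>)) (Sig_of r))"
    and q_done: "proj w (Sig_of q) = proj (split \<alpha>) (Sig_of q)"
    and run_Rcv: "run A (w @ [Rcv p q m]) (chi0 A) \<noteq> None"
  obtains w' where "compliant w' \<beta>" and "proj w' (Sig_of q) = []"
    and "run A (w' @ [Rcv p q m]) (chi0 A) \<noteq> None"
proof
  txt \<open>Delete from w the events accounted for by \<alpha>; what remains belongs to \<beta>.\<close>
  define n where "n x = min (count_list (split \<alpha>) x) (count_list w x)" for x
  have q_counts: "count_list w x = count_list (split \<alpha>) x" if "x \<in> Sig_of q" for x
    using q_done count_proj[OF that, of w] count_proj[OF that, of "split \<alpha>"] by simp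
  show "compliant (remove_firsts n w) \<beta>"
    unfolding n_def using prefixes by (rule compliant_remove_firsts)
  show "proj (remove_firsts n w) (Sig_of q) = []"
    unfolding proj_remove_firsts
    by (rule remove_firsts_eq_Nil) (auto simp: n_def count_proj q_counts)
  have Rcv_kept: "remove_firsts n (w @ [Rcv p q m]) = remove_firsts n w @ [Rcv p q m]"
    by (simp add: remove_firsts_append n_def)
  have "removable n (w @ [Rcv p q m])"
  proof (rule removableI)
    fix p' q' m'
    have "count_list w (Rcv p' q' m') \<le> count_list w (Snd p' q' m')"
      by (rule count_Rcv_le_count_Snd[OF run])
    moreover have "count_list (w @ [Rcv p q m]) (Rcv p' q' m') \<le>
        count_list (w @ [Rcv p q m]) (Snd p' q' m')"
      by (rule count_Rcv_le_count_Snd[OF run_Rcv])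
    moreover have "count_list (split \<alpha>) (Snd p' q' m') = count_list (split \<alpha>) (Rcv p' q' m')"
      by (rule count_split_Snd_eq_Rcv)
    moreover have "count_list w (Rcv p q m) = count_list (split \<alpha>) (Rcv p q m)"
      by (simp add: q_counts)
    ultimately show "n (Rcv p' q' m') \<le> count_list (w @ [Rcv p q m]) (Rcv p' q' m')"
      and "n (Rcv p' q' m') \<le> n (Snd p' q' m')"
      and "n (Rcv p' q' m') < count_list (w @ [Rcv p q m]) (Rcv p' q' m') \<Longrightarrow>
        n (Snd p' q' m') = n (Rcv p' q' m')"
      unfolding n_def by (auto split: if_splits)
  qed
  with run_Rcv have "run A (remove_firsts n (w @ [Rcv p q m])) (chi0 A) \<noteq> None"
    by (rule run_remove_firsts_defined)
  then show "run A (remove_firsts n w @ [Rcv p q m]) (chi0 A) \<noteq> None"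
    unfolding Rcv_kept .
qed

lemma CC6_holds: "CC6 A"
  unfolding CC6_def ch_compliant_def
  by (intro allI impI, elim conjE, rule residual_enables_Rcv) blast+

end

theorem lemma6p2:
  fixes A :: "('p,'v,'c,'b) arch"
  assumes "buffer_axioms A"
  shows "CC1 A \<and> CC2 A \<and> CC3 A \<and> CC4 A \<and> CC5 A \<and> CC6 A"
proof -
  interpret buffer_arch A
    using assms by (rule buffer_arch.intro)
  show ?thesis
    using CC1_holds CC2_holds CC3_holds CC4_holds CC5_holds CC6_holds by blast
qed

end
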